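(* For every generalized line graph $G$, the competition number satisfies $k(G)\le 2$.
   Context: All graphs are finite and simple. For a digraph $D$, its competition graph $C(D)$ is the graph with vertex set $V(D)$ in which two distinct vertices $u,v$ are adjacent iff there is a vertex $x$ with arcs $(u,x),(v,x)\in A(D)$. The competition number $k(G)$ of a graph $G$ is the smallest nonnegative integer $k$ such that $G$ together with $k$ new isolated vertices is the competition graph of an acyclic digraph. For a positive integer $m$, the cocktail party graph $CP(m)$ is the complete multipartite graph with $m$ parts each of size two (vertices $x_l,y_l$, $l\in\{1,\dots,m\}$; $x_i x_j$, $y_iy_j$ adjacent for $i<j$, $x_iy_j$ adjacent for $i\ne j$); $CP(1)$ is two vertices with no edge. A vertex-weighted graph $(H,f)$ is a graph $H$ with a function $f:V(H)\to\mathbb{Z}_{\ge 0}$. The generalized line graph $L(H,f)$ is obtained from the disjoint union of the line graph $L(H)$ (vertex set $E(H)$, two distinct edges adjacent iff they share an endpoint) and the graphs $Q_v:=CP(f(v))$ for each $v\in V(H)$ with $f(v)>0$, by adding all edges between every vertex of $Q_v$ and every $e\in V(L(H))$ that is incident to $v$ in $H$. A graph is a generalized line graph if it is isomorphic to $L(H,f)$ for some vertex-weighted graph $(H,f)$. *)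

theory Defs
  imports Main
begin

definition simple_graph :: "'a set \<Rightarrow> 'a set set \<Rightarrow> bool" where
  "simple_graph V E \<longleftrightarrow> finite V \<and>
     (\<forall>e\<in>E. \<exists>u v. e = {u, v} \<and> u \<noteq> v \<and> u \<in> V \<and> v \<in> V)"

definition graph_iso :: "'a set \<Rightarrow> 'a set set \<Rightarrow> 'b set \<Rightarrow> 'b set set \<Rightarrow> bool" where
  "graph_iso V E V' E' \<longleftrightarrow> (\<exists>\<phi>. bij_betw \<phi> V V' \<and>
     (\<forall>u\<in>V. \<forall>v\<in>V. {u, v} \<in> E \<longleftrightarrow> {\<phi> u, \<phi> v} \<in> E'))"

definition competition_edges :: "'a set \<Rightarrow> ('a \<times> 'a) set \<Rightarrow> 'a set set" where
  "competition_edges V A = {{u, v} | u v. u \<in> V \<and> v \<in> V \<and> u \<noteq> v \<and>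
      (\<exists>x. (u, x) \<in> A \<and> (v, x) \<in> A)}"

text \<open>G together with k new isolated vertices (Inr 0, ..., Inr (k-1)) is the competition
  graph of an acyclic digraph.\<close>
definition comp_with_isolated :: "'a set \<Rightarrow> 'a set set \<Rightarrow> nat \<Rightarrow> bool" where
  "comp_with_isolated V E k \<longleftrightarrow>
     (let V' = (Inl ` V \<union> Inr ` {..<k}) :: ('a + nat) set in
      \<exists>A. A \<subseteq> V' \<times> V' \<and> acyclic A \<and>
          competition_edges V' A = (\<lambda>e. Inl ` e) ` E)"

definition competition_number :: "'a set \<Rightarrow> 'a set set \<Rightarrow> nat" where
  "competition_number V E = (LEAST k. comp_with_isolated V E k)"

text \<open>Generalized line graph L(H,f). Vertices: Inl e for edges e of H, and
  Inr (v, l, b) for v in V(H), 1 \<le> l \<le> f v, b :: bool (b = True is x_l, False is y_l of Q_v).\<close>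
definition glg_verts :: "'b set \<Rightarrow> 'b set set \<Rightarrow> ('b \<Rightarrow> nat) \<Rightarrow> ('b set + ('b \<times> nat \<times> bool)) set" where
  "glg_verts HV HE f = Inl ` HE \<union> {Inr (v, l, b) | v l b. v \<in> HV \<and> 1 \<le> l \<and> l \<le> f v}"

definition glg_edges :: "'b set \<Rightarrow> 'b set set \<Rightarrow> ('b \<Rightarrow> nat) \<Rightarrow> ('b set + ('b \<times> nat \<times> bool)) set set" where
  "glg_edges HV HE f =
     {{Inl e, Inl e'} | e e'. e \<in> HE \<and> e' \<in> HE \<and> e \<noteq> e' \<and> e \<inter> e' \<noteq> {}}
   \<union> {{Inr (v, i, a), Inr (v, j, b)} | v i j a b. v \<in> HV \<and> 1 \<le> i \<and> i \<le> f v \<and>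
        1 \<le> j \<and> j \<le> f v \<and> i \<noteq> j}
   \<union> {{Inl e, Inr (v, i, a)} | e v i a. e \<in> HE \<and> v \<in> e \<and> v \<in> HV \<and> 1 \<le> i \<and> i \<le> f v}"

end

theory Submission
  imports Defs
begin

text \<open>
  Given an edge clique cover of a graph and an order of its vertices, each clique can be given a
  private common prey that comes after all of its members -- a later vertex or one of \<open>k\<close> new
  isolated vertices. All arcs then go forward, so the digraph is acyclic, and its competition graph
  is the graph plus the new vertices. Working backwards from the last vertex, such an assignment
  exists as soon as, for every suffix of the order, fewer cliques meet the suffix than its length
  plus \<open>k\<close>.

  For \<open>L(H, f)\<close> let \<open>E\<^sub>v\<close> be the edges of \<open>H\<close> at \<open>v\<close> and \<open>x\<^sub>i, y\<^sub>i\<close> the vertices of \<open>Q\<^sub>v\<close>. The cliques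
  \<open>E\<^sub>v \<union> {x\<^sub>i}\<close>, \<open>E\<^sub>v \<union> {y\<^sub>i}\<close> and \<open>{y\<^sub>j} \<union> {x\<^sub>i | i \<noteq> j}\<close> (for \<open>f v > 0\<close>) together with the stars \<open>E\<^sub>v\<close>
  (for \<open>f v = 0\<close>) cover all edges. Order the edges of \<open>H\<close> first and then, block by block,
  \<open>x\<^sub>1, \<dots>, x\<^sub>m, y\<^sub>1, \<dots>, y\<^sub>m\<close>. Each block satisfies the suffix condition with \<open>k = 2\<close> on its own,
  and the edges of \<open>H\<close> can be ordered so that every suffix of \<open>i\<close> edges meets at most \<open>i + 1\<close>
  star centres: build the order backwards, adding an edge that brings at most one new star centre;
  if there is none, every star centre met so far has all its (at least two) edges among the placed
  ones, and double counting bounds their number by the number of placed edges.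
\<close>

section \<open>Clique covers and the suffix condition\<close>

definition cover_edges :: "'v set set \<Rightarrow> 'v set set" where
  "cover_edges KK = {{u, w} | u w. u \<noteq> w \<and> (\<exists>K\<in>KK. u \<in> K \<and> w \<in> K)}"

text \<open>The cliques meeting the suffix starting at position \<open>n\<close> need preys among the
  \<open>length ws - n - 1\<close> later vertices and the \<open>k\<close> new ones.\<close>
definition suffix_bound :: "'v list \<Rightarrow> 'v set set \<Rightarrow> nat \<Rightarrow> bool" where
  "suffix_bound ws KK k \<longleftrightarrow> (\<forall>n. card {K\<in>KK. K \<inter> set (drop n ws) \<noteq> {}} < length ws - n + k)"

lemma cover_edges_iff:
  "e \<in> cover_edges KK \<longleftrightarrow> (\<exists>u w K. e = {u, w} \<and> u \<noteq> w \<and> K \<in> KK \<and> u \<in> K \<and> w \<in> K)"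
  unfolding cover_edges_def by blast

lemma cover_edgesI: "u \<noteq> w \<Longrightarrow> K \<in> KK \<Longrightarrow> u \<in> K \<Longrightarrow> w \<in> K \<Longrightarrow> {u, w} \<in> cover_edges KK"
  unfolding cover_edges_iff by blast

lemma cover_edges_image:
  assumes "inj_on h (\<Union>KK)"
  shows "cover_edges ((`) h ` KK) = (`) h ` cover_edges KK"
proof
  show "cover_edges ((`) h ` KK) \<subseteq> (`) h ` cover_edges KK"
  proof
    fix e assume "e \<in> cover_edges ((`) h ` KK)"
    then obtain u w K where "e = {h u, h w}" "h u \<noteq> h w" "K \<in> KK" "u \<in> K" "w \<in> K"
      unfolding cover_edges_iff by blast
    then have "e = h ` {u, w}" "{u, w} \<in> cover_edges KK"
      unfolding cover_edges_iff by auto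
    then show "e \<in> (`) h ` cover_edges KK" by blast
  qed
  show "(`) h ` cover_edges KK \<subseteq> cover_edges ((`) h ` KK)"
  proof
    fix e assume "e \<in> (`) h ` cover_edges KK"
    then obtain x where "x \<in> cover_edges KK" "e = h ` x" by blast
    then obtain u w K where uw: "e = h ` {u, w}" "u \<noteq> w" "K \<in> KK" "u \<in> K" "w \<in> K"
      unfolding cover_edges_iff by blast
    then have "h u \<noteq> h w" using assms by (meson UnionI inj_onD)
    then show "e \<in> cover_edges ((`) h ` KK)" unfolding cover_edges_iff using uw by auto
  qed
qed

lemma simple_graph_cover_edges:
  assumes "finite V" "\<forall>K\<in>KK. K \<subseteq> V"
  shows "simple_graph V (cover_edges KK)"
  using assms unfolding simple_graph_def cover_edges_def by blast

lemma finite_cliques: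
  assumes "\<forall>K\<in>KK. K \<subseteq> set ws"
  shows "finite KK"
  using assms by (meson List.finite_set PowI finite_Pow_iff finite_subset subsetI)

lemma suffix_bound_map:
  assumes inj: "inj_on h (set ws)" and KK: "\<forall>K\<in>KK. K \<subseteq> set ws" and bound: "suffix_bound ws KK k"
  shows "suffix_bound (map h ws) ((`) h ` KK) k"
  unfolding suffix_bound_def
proof
  fix n
  let ?meet = "{K\<in>KK. K \<inter> set (drop n ws) \<noteq> {}}"
  have "{K\<in>(`) h ` KK. K \<inter> set (drop n (map h ws)) \<noteq> {}} \<subseteq> (`) h ` ?meet"
  proof
    fix K' assume "K' \<in> {K\<in>(`) h ` KK. K \<inter> set (drop n (map h ws)) \<noteq> {}}"
    then obtain K where K: "K \<in> KK" "K' = h ` K" "h ` K \<inter> h ` set (drop n ws) \<noteq> {}"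
      by (auto simp: drop_map)
    have "h ` (K \<inter> set (drop n ws)) = h ` K \<inter> h ` set (drop n ws)"
      using K(1) KK by (intro inj_on_image_Int[OF inj]) (auto dest: in_set_dropD)
    then show "K' \<in> (`) h ` ?meet" using K by auto
  qed
  then have "card {K\<in>(`) h ` KK. K \<inter> set (drop n (map h ws)) \<noteq> {}} \<le> card ((`) h ` ?meet)"
    by (rule card_mono[rotated]) (simp add: finite_cliques[OF KK])
  also have "\<dots> \<le> card ?meet"
    by (rule card_image_le) (simp add: finite_cliques[OF KK])
  also have "\<dots> < length ws - n + k"
    using bound unfolding suffix_bound_def by blast
  finally show "card {K\<in>(`) h ` KK. K \<inter> set (drop n (map h ws)) \<noteq> {}} < length (map h ws) - n + k"
    by simp
qed

lemma suffix_bound_snocD: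
  assumes bound: "suffix_bound (ws @ [w]) KK k" and KK: "\<forall>K\<in>KK. K \<subseteq> set (ws @ [w])"
  shows "card {K\<in>KK. w \<in> K} \<le> k"
    and "suffix_bound ws {K\<in>KK. w \<notin> K} (k - card {K\<in>KK. w \<in> K} + 1)"
proof -
  let ?KW = "{K\<in>KK. w \<in> K}"
  have fin: "finite KK" by (rule finite_cliques[OF KK])
  have "{K\<in>KK. K \<inter> set (drop (length ws) (ws @ [w])) \<noteq> {}} = ?KW" by auto
  moreover have "card {K\<in>KK. K \<inter> set (drop (length ws) (ws @ [w])) \<noteq> {}} < length (ws @ [w]) - length ws + k"
    using bound unfolding suffix_bound_def by blast
  ultimately show KW: "card ?KW \<le> k" by simp
  show "suffix_bound ws {K\<in>KK. w \<notin> K} (k - card ?KW + 1)"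
    unfolding suffix_bound_def
  proof
    fix n
    show "card {K\<in>{K\<in>KK. w \<notin> K}. K \<inter> set (drop n ws) \<noteq> {}} < length ws - n + (k - card ?KW + 1)"
    proof (cases "n \<le> length ws")
      case True
      define F where "F = {K\<in>KK. K \<inter> set (drop n (ws @ [w])) \<noteq> {}}"
      have "set (drop n (ws @ [w])) = insert w (set (drop n ws))" using True by simp
      then have "{K\<in>{K\<in>KK. w \<notin> K}. K \<inter> set (drop n ws) \<noteq> {}} = F - ?KW" and "?KW \<subseteq> F"
        unfolding F_def by auto
      moreover have "card F < length (ws @ [w]) - n + k"
        using bound unfolding suffix_bound_def F_def by blast
      moreover have "finite F" unfolding F_def using fin by simp
      moreover have "card (F - ?KW) = card F - card ?KW"
        using \<open>?KW \<subseteq> F\<close> \<open>finite F\<close> by (meson card_Diff_subset finite_subset)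
      ultimately show ?thesis using True KW by simp
    qed simp
  qed
qed

lemma suffix_bound_append:
  assumes bound1: "suffix_bound ws1 K1 k" and bound2: "suffix_bound ws2 K2 k"
    and card2: "card K2 \<le> length ws2" and disjoint: "\<forall>K\<in>K1. K \<inter> set ws2 = {}"
    and fin: "finite K1" "finite K2"
  shows "suffix_bound (ws1 @ ws2) (K1 \<union> K2) k"
  unfolding suffix_bound_def
proof
  fix n
  let ?meet = "\<lambda>KK X. {K\<in>KK. K \<inter> X \<noteq> {}}"
  show "card (?meet (K1 \<union> K2) (set (drop n (ws1 @ ws2)))) < length (ws1 @ ws2) - n + k"
  proof (cases "length ws1 \<le> n")
    case True
    let ?X = "set (drop (n - length ws1) ws2)"
    have "set (drop n (ws1 @ ws2)) = ?X" using True by simp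
    moreover have "?X \<subseteq> set ws2" by (rule set_drop_subset)
    ultimately have "?meet (K1 \<union> K2) (set (drop n (ws1 @ ws2))) = ?meet K2 ?X"
      using disjoint by auto
    moreover have "card (?meet K2 ?X) < length ws2 - (n - length ws1) + k"
      using bound2 unfolding suffix_bound_def by blast
    ultimately show ?thesis using True by simp
  next
    case False
    then have "set (drop n (ws1 @ ws2)) = set (drop n ws1) \<union> set ws2" by simp
    then have "?meet (K1 \<union> K2) (set (drop n (ws1 @ ws2))) \<subseteq> ?meet K1 (set (drop n ws1)) \<union> K2"
      using disjoint by auto
    then have "card (?meet (K1 \<union> K2) (set (drop n (ws1 @ ws2)))) \<le> card (?meet K1 (set (drop n ws1)) \<union> K2)"
      by (rule card_mono[rotated]) (use fin in simp)
    also have "\<dots> \<le> card (?meet K1 (set (drop n ws1))) + card K2" by (rule card_Un_le)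
    also have "card (?meet K1 (set (drop n ws1))) < length ws1 - n + k"
      using bound1 unfolding suffix_bound_def by blast
    finally show ?thesis using card2 False by simp
  qed
qed

section \<open>Acyclic digraphs from ordered clique covers\<close>

definition sink_after :: "'v list \<Rightarrow> 'v set \<Rightarrow> 'v set \<Rightarrow> 'v \<Rightarrow> bool" where
  "sink_after ws S K y \<longleftrightarrow> y \<in> S \<or> (\<exists>i<length ws. y = ws ! i \<and> K \<subseteq> set (take i ws))"

lemma sink_after_in_set: "sink_after ws S K y \<Longrightarrow> y \<in> S \<union> set ws"
  unfolding sink_after_def by (auto dest: nth_mem)

lemma sink_after_snoc:
  assumes "sink_after ws (insert w S') K y" "K \<subseteq> set ws" "S' \<subseteq> S"
  shows "sink_after (ws @ [w]) S K y"
proof -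
  from assms(1) consider "y \<in> S'" | "y = w" | i where "i < length ws" "y = ws ! i" "K \<subseteq> set (take i ws)"
    unfolding sink_after_def by blast
  then show ?thesis
  proof cases
    case 1
    then show ?thesis using assms(3) unfolding sink_after_def by blast
  next
    case 2
    then show ?thesis using assms(2) unfolding sink_after_def by (intro disjI2 exI[of _ "length ws"]) auto
  next
    case (3 i)
    then show ?thesis unfolding sink_after_def by (intro disjI2 exI[of _ i]) (auto simp: nth_append)
  qed
qed

lemma suffix_bound_sinks:
  assumes "distinct ws" "\<forall>K\<in>KK. K \<noteq> {} \<and> K \<subseteq> set ws"
    and "finite S" "card S = k" "S \<inter> set ws = {}" "suffix_bound ws KK k"
  shows "\<exists>g. inj_on g KK \<and> (\<forall>K\<in>KK. sink_after ws S K (g K))"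
  using assms
proof (induction ws arbitrary: KK S k rule: rev_induct)
  case Nil
  then show ?case by auto
next
  case (snoc w ws)
  txt \<open>The cliques containing the last vertex \<open>w\<close> must be served by new vertices; in exchange,
    \<open>w\<close> itself becomes available as a prey for the remaining cliques.\<close>
  define KW where "KW = {K\<in>KK. w \<in> K}"
  have KK: "\<forall>K\<in>KK. K \<subseteq> set (ws @ [w])" using snoc.prems(2) by blast
  have "finite KW" unfolding KW_def using finite_cliques[OF KK] by simp
  moreover obtain SW where SW: "SW \<subseteq> S" "card SW = card KW"
    using obtain_subset_with_card_n suffix_bound_snocD(1)[OF snoc.prems(6) KK] snoc.prems(4)
    unfolding KW_def by metis
  moreover have "finite SW" using SW(1) snoc.prems(3) finite_subset by blast
  ultimately obtain h where h: "bij_betw h KW SW" by (metis finite_same_card_bij)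
  have w: "w \<notin> S" "w \<notin> set ws" using snoc.prems(1,5) by auto
  obtain g' where g': "inj_on g' (KK - KW)" "\<forall>K\<in>KK - KW. sink_after ws (insert w (S - SW)) K (g' K)"
  proof (rule snoc.IH[THEN exE])
    show "distinct ws" using snoc.prems(1) by simp
    show "\<forall>K\<in>KK - KW. K \<noteq> {} \<and> K \<subseteq> set ws" using snoc.prems(2) unfolding KW_def by auto
    show "finite (insert w (S - SW))" using snoc.prems(3) by simp
    show "card (insert w (S - SW)) = k - card KW + 1"
      using w SW snoc.prems(3,4) \<open>finite SW\<close> by (simp add: card_Diff_subset)
    show "insert w (S - SW) \<inter> set ws = {}" using snoc.prems(5) w by auto
    have "KK - KW = {K\<in>KK. w \<notin> K}" unfolding KW_def by blast
    then show "suffix_bound ws (KK - KW) (k - card KW + 1)"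
      using suffix_bound_snocD(2)[OF snoc.prems(6) KK] unfolding KW_def by simp
  qed blast
  define g where "g K = (if K \<in> KW then h K else g' K)" for K
  have "inj_on g (KW \<union> (KK - KW))"
    unfolding g_def
  proof (rule inj_on_disjoint_Un)
    show "inj_on h KW" using h by (rule bij_betw_imp_inj_on)
    have "g' K \<in> insert w (S - SW) \<union> set ws" if "K \<in> KK - KW" for K
      by (rule sink_after_in_set) (use g'(2) that in blast)
    then have "g' ` (KK - KW) \<subseteq> insert w (S - SW) \<union> set ws" by blast
    moreover have "SW \<inter> (insert w (S - SW) \<union> set ws) = {}" using SW(1) snoc.prems(5) w(1) by auto
    ultimately show "h ` KW \<inter> g' ` (KK - KW) = {}"
      unfolding bij_betw_imp_surj_on[OF h] by auto
  qed (rule g'(1))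
  moreover have "KW \<union> (KK - KW) = KK" unfolding KW_def by blast
  moreover have "sink_after (ws @ [w]) S K (g K)" if K: "K \<in> KK" for K
  proof (cases "K \<in> KW")
    case True
    then have "h K \<in> S" using bij_betw_apply[OF h True] SW(1) by blast
    then show ?thesis using True unfolding g_def sink_after_def by simp
  next
    case False
    then have "sink_after ws (insert w (S - SW)) K (g' K)" using g'(2) K by blast
    moreover have "K \<subseteq> set ws" using K False snoc.prems(2) unfolding KW_def by auto
    ultimately have "sink_after (ws @ [w]) S K (g' K)" by (rule sink_after_snoc) blast
    then show ?thesis using False unfolding g_def by simp
  qed
  ultimately show ?case by (intro exI[of _ g]) simp
qed

lemma acyclic_if_rank_increasing:
  assumes "\<And>x y. (x, y) \<in> A \<Longrightarrow> (r x :: nat) < r y"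
  shows "acyclic A"
proof (rule wf_acyclic)
  have "A \<subseteq> inv_image less_than r" using assms by auto
  then show "wf A" by (rule wf_subset[rotated]) simp
qed

lemma competition_edges_sinks:
  assumes "inj_on g KK" "\<forall>K\<in>KK. K \<subseteq> V"
  shows "competition_edges V {(x, g K) | x K. K \<in> KK \<and> x \<in> K} = cover_edges KK"
proof
  show "competition_edges V {(x, g K) | x K. K \<in> KK \<and> x \<in> K} \<subseteq> cover_edges KK"
  proof
    fix e assume "e \<in> competition_edges V {(x, g K) | x K. K \<in> KK \<and> x \<in> K}"
    then obtain u v K K' where "e = {u, v}" "u \<noteq> v" "K \<in> KK" "K' \<in> KK" "u \<in> K" "v \<in> K'" "g K = g K'"
      unfolding competition_edges_def by auto
    moreover from calculation have "K = K'" using inj_onD[OF assms(1)] by blast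
    ultimately show "e \<in> cover_edges KK" unfolding cover_edges_iff by blast
  qed
  show "cover_edges KK \<subseteq> competition_edges V {(x, g K) | x K. K \<in> KK \<and> x \<in> K}"
  proof
    fix e assume "e \<in> cover_edges KK"
    then obtain u v K where "e = {u, v}" "u \<noteq> v" "K \<in> KK" "u \<in> K" "v \<in> K"
      unfolding cover_edges_iff by blast
    then show "e \<in> competition_edges V {(x, g K) | x K. K \<in> KK \<and> x \<in> K}"
      unfolding competition_edges_def using assms(2) by blast
  qed
qed

lemma acyclic_digraph_of_suffix_bound:
  assumes ws: "distinct ws" and KK: "\<forall>K\<in>KK. K \<noteq> {} \<and> K \<subseteq> set ws"
    and S: "finite S" "card S = k" "S \<inter> set ws = {}" and bound: "suffix_bound ws KK k"
  shows "\<exists>A. A \<subseteq> (set ws \<union> S) \<times> (set ws \<union> S) \<and> acyclic A \<and>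
           competition_edges (set ws \<union> S) A = cover_edges KK"
proof -
  obtain g where g: "inj_on g KK" "\<forall>K\<in>KK. sink_after ws S K (g K)"
    using suffix_bound_sinks[OF ws KK S bound] by blast
  define A where "A = {(x, g K) | x K. K \<in> KK \<and> x \<in> K}"
  define r where "r x = (if x \<in> set ws then inv_into {..<length ws} ((!) ws) x else length ws)" for x
  have r_nth: "r (ws ! i) = i" if "i < length ws" for i
    using that ws unfolding r_def by (simp add: inv_into_f_f inj_on_nth)
  have "r x < r y" if "(x, y) \<in> A" for x y
  proof -
    obtain K where K: "K \<in> KK" "x \<in> K" "y = g K" using \<open>(x, y) \<in> A\<close> unfolding A_def by blast
    then have "x \<in> set ws" using KK by blast
    then obtain j where j: "j < length ws" "x = ws ! j" by (auto simp: in_set_conv_nth)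
    have "sink_after ws S K (g K)" using g(2) K(1) by blast
    then consider "g K \<in> S" | i where "i < length ws" "g K = ws ! i" "K \<subseteq> set (take i ws)"
      unfolding sink_after_def by blast
    then show ?thesis
    proof cases
      case 1
      then have "r y = length ws" using S(3) K(3) unfolding r_def by auto
      then show ?thesis using j r_nth by simp
    next
      case (2 i)
      then have "x \<in> set (take i ws)" using K(2) by blast
      then obtain j' where "j' < i" "x = ws ! j'" using 2(1) by (auto simp: in_set_conv_nth)
      then show ?thesis using 2 K(3) r_nth by simp
    qed
  qed
  then have acyclic: "acyclic A" by (rule acyclic_if_rank_increasing)
  have arcs: "A \<subseteq> (set ws \<union> S) \<times> (set ws \<union> S)"
  proof
    fix p assume "p \<in> A"
    then obtain x K where p: "p = (x, g K)" "K \<in> KK" "x \<in> K" unfolding A_def by blast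
    then have "sink_after ws S K (g K)" using g(2) by blast
    then have "g K \<in> S \<union> set ws" by (rule sink_after_in_set)
    then show "p \<in> (set ws \<union> S) \<times> (set ws \<union> S)" using p KK by blast
  qed
  have "competition_edges (set ws \<union> S) A = cover_edges KK"
    unfolding A_def by (rule competition_edges_sinks) (use g(1) KK in auto)
  then show ?thesis using acyclic arcs by blast
qed

lemma comp_with_isolated_if_suffix_bound:
  assumes ws: "distinct ws" "set ws = V" and KK: "\<forall>K\<in>KK. K \<noteq> {} \<and> K \<subseteq> V"
    and E: "E = cover_edges KK" and bound: "suffix_bound ws KK k"
  shows "comp_with_isolated V E k"
proof -
  let ?S = "Inr ` {..<k} :: ('a + nat) set"
  have dist: "distinct (map Inl ws :: ('a + nat) list)" using ws(1) by (simp add: distinct_map)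
  have KK': "\<forall>K\<in>(`) Inl ` KK. K \<noteq> {} \<and> K \<subseteq> set (map Inl ws :: ('a + nat) list)"
    using KK ws(2) by auto
  have S: "finite ?S" "card ?S = k" "?S \<inter> set (map Inl ws) = {}"
    by (auto simp: card_image)
  have bound': "suffix_bound (map Inl ws :: ('a + nat) list) ((`) Inl ` KK) k"
    by (rule suffix_bound_map) (use bound KK ws(2) in auto)
  obtain A where A: "A \<subseteq> (set (map Inl ws) \<union> ?S) \<times> (set (map Inl ws) \<union> ?S)"
    "acyclic A" "competition_edges (set (map Inl ws) \<union> ?S) A = cover_edges ((`) Inl ` KK)"
    using acyclic_digraph_of_suffix_bound[OF dist KK' S bound'] by blast
  have V': "set (map Inl ws) \<union> ?S = Inl ` V \<union> ?S" using ws(2) by simp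
  have E': "cover_edges ((`) Inl ` KK) = (`) Inl ` E"
    unfolding E by (rule cover_edges_image) simp
  show ?thesis
    using A unfolding V' E' comp_with_isolated_def Let_def by blast
qed

lemma simple_graph_edgeE:
  assumes "simple_graph V E" "e \<in> E"
  obtains u v where "e = {u, v}" "u \<noteq> v" "u \<in> V" "v \<in> V"
  using assms unfolding simple_graph_def by blast

lemma graph_iso_edges_image:
  assumes iso: "graph_iso V E W F" and G: "simple_graph V E" and H: "simple_graph W F"
  obtains \<psi> where "bij_betw \<psi> W V" "E = (`) \<psi> ` F"
proof -
  obtain \<phi> where \<phi>: "bij_betw \<phi> V W" and adj: "\<forall>u\<in>V. \<forall>v\<in>V. {u, v} \<in> E \<longleftrightarrow> {\<phi> u, \<phi> v} \<in> F"
    using iso unfolding graph_iso_def by blast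
  define \<psi> where "\<psi> = inv_into V \<phi>"
  have \<psi>: "bij_betw \<psi> W V" unfolding \<psi>_def using \<phi> by (rule bij_betw_inv_into)
  have \<psi>\<phi>: "\<psi> (\<phi> u) = u" if "u \<in> V" for u
    unfolding \<psi>_def using that \<phi> by (simp add: bij_betw_def inv_into_f_f)
  have \<phi>\<psi>: "\<phi> (\<psi> a) = a" if "a \<in> W" for a
    unfolding \<psi>_def using that \<phi> by (simp add: bij_betw_def f_inv_into_f)
  have "E \<subseteq> (`) \<psi> ` F"
  proof
    fix e assume e: "e \<in> E"
    obtain u v where uv: "e = {u, v}" "u \<noteq> v" "u \<in> V" "v \<in> V" by (rule simple_graph_edgeE[OF G e])
    then have "{\<phi> u, \<phi> v} \<in> F" using adj e by blast
    moreover have "e = \<psi> ` {\<phi> u, \<phi> v}" using uv \<psi>\<phi> by simp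
    ultimately show "e \<in> (`) \<psi> ` F" by blast
  qed
  moreover have "(`) \<psi> ` F \<subseteq> E"
  proof
    fix e assume "e \<in> (`) \<psi> ` F"
    then obtain e' where e': "e' \<in> F" "e = \<psi> ` e'" by blast
    obtain a b where ab: "e' = {a, b}" "a \<noteq> b" "a \<in> W" "b \<in> W" by (rule simple_graph_edgeE[OF H e'(1)])
    then have "\<psi> a \<in> V" "\<psi> b \<in> V" using bij_betw_apply[OF \<psi>] by auto
    moreover have "{\<phi> (\<psi> a), \<phi> (\<psi> b)} \<in> F" using e' ab \<phi>\<psi> by simp
    ultimately have "{\<psi> a, \<psi> b} \<in> E" using adj by blast
    then show "e \<in> E" using e' ab by simp
  qed
  ultimately show ?thesis using that \<psi> by blast
qed

lemma comp_with_isolated_via_iso: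
  assumes iso: "graph_iso V E W F" and G: "simple_graph V E"
    and ws: "distinct ws" "set ws = W" and KK: "\<forall>K\<in>KK. K \<noteq> {} \<and> K \<subseteq> W"
    and F: "F = cover_edges KK" and bound: "suffix_bound ws KK k"
  shows "comp_with_isolated V E k"
proof -
  have "simple_graph W F" unfolding F ws(2)[symmetric] using KK ws(2)
    by (intro simple_graph_cover_edges) auto
  then obtain \<psi> where \<psi>: "bij_betw \<psi> W V" "E = (`) \<psi> ` cover_edges KK"
    using graph_iso_edges_image[OF iso G] unfolding F by blast
  have inj: "inj_on \<psi> W" using \<psi>(1) by (rule bij_betw_imp_inj_on)
  show ?thesis
  proof (rule comp_with_isolated_if_suffix_bound)
    show "distinct (map \<psi> ws)" using ws inj by (simp add: distinct_map)
    show "set (map \<psi> ws) = V" using ws(2) bij_betw_imp_surj_on[OF \<psi>(1)] by simp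
    show "\<forall>K\<in>(`) \<psi> ` KK. K \<noteq> {} \<and> K \<subseteq> V" using KK bij_betw_imp_surj_on[OF \<psi>(1)] by blast
    show "E = cover_edges ((`) \<psi> ` KK)"
      unfolding \<psi>(2) using KK by (intro cover_edges_image[symmetric] inj_on_subset[OF inj]) blast
    show "suffix_bound (map \<psi> ws) ((`) \<psi> ` KK) k"
      by (rule suffix_bound_map) (use inj ws KK bound in auto)
  qed
qed

section \<open>Ordering the edges of a graph\<close>

lemma card_le_card_edges_if_degree_ge_2:
  fixes P :: "'b set set"
  assumes P: "finite P" "\<forall>e\<in>P. card e = 2" and deg: "\<forall>v\<in>D. 2 \<le> card {e\<in>P. v \<in> e}"
  shows "card D \<le> card P"
proof -
  have fin_e: "finite e" if "e \<in> P" for e using P(2) that card.infinite by fastforce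
  have "D \<subseteq> \<Union>P"
  proof
    fix v assume "v \<in> D"
    then have "{e\<in>P. v \<in> e} \<noteq> {}" using deg by (metis card.empty not_numeral_le_zero)
    then show "v \<in> \<Union>P" by blast
  qed
  then have fin_D: "finite D" using P(1) fin_e by (meson finite_Union finite_subset)
  have "2 * card D = (\<Sum>v\<in>D. 2::nat)" by simp
  also have "\<dots> \<le> (\<Sum>v\<in>D. card {e\<in>P. v \<in> e})" by (rule sum_mono) (use deg in blast)
  also have "\<dots> = (\<Sum>v\<in>D. \<Sum>e\<in>P. if v \<in> e then 1 else 0)"
    by (rule sum.cong[OF refl]) (simp add: sum.If_cases P(1) Int_def conj_commute)
  also have "\<dots> = (\<Sum>e\<in>P. \<Sum>v\<in>D. if v \<in> e then 1 else 0)" by (rule sum.swap)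
  also have "\<dots> = (\<Sum>e\<in>P. card (D \<inter> e))"
    by (rule sum.cong[OF refl]) (simp add: sum.If_cases fin_D Int_def)
  also have "\<dots> \<le> (\<Sum>e\<in>P. 2)"
    by (rule sum_mono) (metis P(2) card_mono fin_e inf_le2)
  also have "\<dots> = 2 * card P" by simp
  finally show ?thesis by simp
qed

lemma exists_edge_extending_suffix:
  fixes HE :: "'b set set"
  assumes HE: "finite HE" "\<forall>e\<in>HE. card e = 2" and C: "\<forall>v\<in>C. 2 \<le> card {e\<in>HE. v \<in> e}"
    and P: "P \<subset> HE" "card (C \<inter> \<Union>P) \<le> card P + 1"
  shows "\<exists>e\<in>HE - P. card (C \<inter> \<Union>(insert e P)) \<le> card P + 2"
proof -
  have fin_e: "finite e" if "e \<in> HE" for e using HE(2) that card.infinite by fastforce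
  have fin_U: "finite (\<Union>P)" using P(1) HE(1) fin_e by (meson finite_UnionD finite_Union finite_subset psubset_imp_subset subsetD)
  show ?thesis
  proof (cases "\<exists>e\<in>HE - P. \<exists>v\<in>e. v \<notin> C \<or> v \<in> \<Union>P")
    case True
    then obtain e v where ev: "e \<in> HE - P" "v \<in> e" "v \<notin> C \<or> v \<in> \<Union>P" by blast
    have "C \<inter> \<Union>(insert e P) \<subseteq> (C \<inter> \<Union>P) \<union> (e - {v})" using ev(3) by blast
    then have "card (C \<inter> \<Union>(insert e P)) \<le> card ((C \<inter> \<Union>P) \<union> (e - {v}))"
      by (rule card_mono[rotated]) (use fin_U fin_e ev(1) in simp)
    also have "\<dots> \<le> card (C \<inter> \<Union>P) + card (e - {v})" by (rule card_Un_le)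
    also have "card (e - {v}) = 1" using HE(2) ev(1,2) fin_e by (simp add: card_Diff_singleton)
    finally have "card (C \<inter> \<Union>(insert e P)) \<le> card P + 2" using P(2) by linarith
    then show ?thesis using ev(1) by blast
  next
    case False
    txt \<open>Every remaining edge lies inside \<open>C - \<Union>P\<close>, so the vertices of \<open>C \<inter> \<Union>P\<close> keep all
      their (at least two) edges in \<open>P\<close> and double counting applies.\<close>
    have "card (C \<inter> \<Union>P) \<le> card P"
    proof (rule card_le_card_edges_if_degree_ge_2)
      show "finite P" using P(1) HE(1) finite_subset by blast
      show "\<forall>e\<in>P. card e = 2" using P(1) HE(2) by blast
      show "\<forall>v\<in>C \<inter> \<Union>P. 2 \<le> card {e\<in>P. v \<in> e}"
      proof
        fix v assume v: "v \<in> C \<inter> \<Union>P"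
        have "{e\<in>P. v \<in> e} = {e\<in>HE. v \<in> e}" using False v P(1) by blast
        then show "2 \<le> card {e\<in>P. v \<in> e}" using C v by simp
      qed
    qed
    moreover obtain e where e: "e \<in> HE - P" using P(1) by blast
    moreover have "card (C \<inter> \<Union>(insert e P)) \<le> card (C \<inter> \<Union>P) + card e"
      by (rule order_trans[OF card_mono card_Un_le]) (use fin_U fin_e e in auto)
    ultimately have "card (C \<inter> \<Union>(insert e P)) \<le> card P + 2" using HE(2) by force
    then show ?thesis using e by blast
  qed
qed

lemma edge_order_extending_suffix:
  fixes HE :: "'b set set"
  assumes HE: "finite HE" "\<forall>e\<in>HE. card e = 2" and C: "\<forall>v\<in>C. 2 \<le> card {e\<in>HE. v \<in> e}"
  shows "P \<subseteq> HE \<Longrightarrow> card (C \<inter> \<Union>P) \<le> card P + 1 \<Longrightarrow>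
    \<exists>es. distinct es \<and> set es = HE - P \<and>
      (\<forall>n. card (C \<inter> (\<Union>(set (drop n es)) \<union> \<Union>P)) \<le> length es - n + card P + 1)"
proof (induction "card (HE - P)" arbitrary: P)
  case 0
  then have "HE - P = {}" using HE(1) by simp
  then show ?case using 0 by (intro exI[of _ "[]"]) simp
next
  case (Suc c)
  then have "P \<subset> HE" by auto
  then obtain e where e: "e \<in> HE - P" and bound: "card (C \<inter> \<Union>(insert e P)) \<le> card P + 2"
    using exists_edge_extending_suffix[OF HE C _ Suc.prems(2)] by blast
  have fin_P: "finite P" using Suc.prems(1) HE(1) finite_subset by blast
  have card_P': "card (insert e P) = card P + 1" using e fin_P by simp
  obtain es where es: "distinct es" "set es = HE - insert e P"
    "\<forall>n. card (C \<inter> (\<Union>(set (drop n es)) \<union> \<Union>(insert e P))) \<le> length es - n + card (insert e P) + 1"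
  proof (rule Suc.hyps(1)[THEN exE])
    show "c = card (HE - insert e P)" using Suc.hyps(2) e HE(1) by (simp add: card_Diff_subset_Int)
  qed (use Suc.prems(1) e bound card_P' in auto)
  show ?case
  proof (intro exI conjI allI)
    show "distinct (es @ [e])" "set (es @ [e]) = HE - P" using es(1,2) e by auto
    fix n
    show "card (C \<inter> (\<Union>(set (drop n (es @ [e]))) \<union> \<Union>P)) \<le> length (es @ [e]) - n + card P + 1"
    proof (cases "n \<le> length es")
      case True
      then have eq: "\<Union>(set (drop n (es @ [e]))) \<union> \<Union>P = \<Union>(set (drop n es)) \<union> \<Union>(insert e P)" by auto
      have "card (C \<inter> (\<Union>(set (drop n es)) \<union> \<Union>(insert e P))) \<le> length es - n + card (insert e P) + 1"
        using es(3) by blast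
      moreover have "length es - n + card (insert e P) + 1 = length (es @ [e]) - n + card P + 1"
        using True card_P' by simp
      ultimately show ?thesis unfolding eq by linarith
    qed (use Suc.prems(2) in simp)
  qed
qed

section \<open>Cliques of a generalized line graph\<close>

type_synonym 'b glg_vertex = "'b set + ('b \<times> nat \<times> bool)"

definition star :: "'b set set \<Rightarrow> 'b \<Rightarrow> 'b glg_vertex set" where
  "star HE v = Inl ` {e\<in>HE. v \<in> e}"

definition side :: "('b \<Rightarrow> nat) \<Rightarrow> 'b \<Rightarrow> bool \<Rightarrow> 'b glg_vertex set" where
  "side f v b = (\<lambda>i. Inr (v, i, b)) ` {1..f v}"

definition cross :: "('b \<Rightarrow> nat) \<Rightarrow> 'b \<Rightarrow> nat \<Rightarrow> 'b glg_vertex set" where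
  "cross f v j = insert (Inr (v, j, False)) ((\<lambda>i. Inr (v, i, True)) ` ({1..f v} - {j}))"

text \<open>Singleton cliques would only spoil the counting: there is no cross clique for \<open>f v = 1\<close>, and
  stars are used only for centres of degree at least two (for \<open>f v > 0\<close> they lie in the side cliques).\<close>
definition vertex_cliques :: "'b set set \<Rightarrow> ('b \<Rightarrow> nat) \<Rightarrow> 'b \<Rightarrow> 'b glg_vertex set set" where
  "vertex_cliques HE f v =
     (if f v = 0 then {}
      else {star HE v \<union> side f v True, star HE v \<union> side f v False} \<union>
        (if f v = 1 then {} else cross f v ` {1..f v}))"

definition glg_cliques :: "'b set \<Rightarrow> 'b set set \<Rightarrow> ('b \<Rightarrow> nat) \<Rightarrow> 'b glg_vertex set set" where
  "glg_cliques HV HE f =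
     star HE ` {v\<in>HV. f v = 0 \<and> 2 \<le> card {e\<in>HE. v \<in> e}} \<union> (\<Union>v\<in>HV. vertex_cliques HE f v)"

lemma glg_edge_Inl_Inl:
  "e \<in> HE \<Longrightarrow> e' \<in> HE \<Longrightarrow> e \<noteq> e' \<Longrightarrow> v \<in> e \<Longrightarrow> v \<in> e' \<Longrightarrow> {Inl e, Inl e'} \<in> glg_edges HV HE f"
  unfolding glg_edges_def by (rule UnI1, rule UnI1, intro CollectI exI[of _ e] exI[of _ e']) blast

lemma glg_edge_Inr_Inr:
  "v \<in> HV \<Longrightarrow> i \<in> {1..f v} \<Longrightarrow> j \<in> {1..f v} \<Longrightarrow> i \<noteq> j \<Longrightarrow>
    {Inr (v, i, a), Inr (v, j, b)} \<in> glg_edges HV HE f"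
  unfolding glg_edges_def
  by (rule UnI1, rule UnI2, intro CollectI exI[of _ v] exI[of _ i] exI[of _ j] exI[of _ a] exI[of _ b]) simp

lemma glg_edge_Inl_Inr:
  "e \<in> HE \<Longrightarrow> v \<in> e \<Longrightarrow> v \<in> HV \<Longrightarrow> i \<in> {1..f v} \<Longrightarrow> {Inl e, Inr (v, i, a)} \<in> glg_edges HV HE f"
  unfolding glg_edges_def by (rule UnI2, intro CollectI exI[of _ e] exI[of _ v] exI[of _ i] exI[of _ a]) simp

lemma glg_edgeE:
  assumes "p \<in> glg_edges HV HE f"
  obtains (Inl_Inl) e e' v where "p = {Inl e, Inl e'}" "e \<in> HE" "e' \<in> HE" "e \<noteq> e'" "v \<in> e" "v \<in> e'"
  | (Inr_Inr) v i j a b where "p = {Inr (v, i, a), Inr (v, j, b)}" "v \<in> HV" "i \<in> {1..f v}" "j \<in> {1..f v}" "i \<noteq> j"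
  | (Inl_Inr) e v i a where "p = {Inl e, Inr (v, i, a)}" "e \<in> HE" "v \<in> e" "v \<in> HV" "i \<in> {1..f v}"
proof -
  from assms consider
    (1) "p \<in> {{Inl e, Inl e'} | e e'. e \<in> HE \<and> e' \<in> HE \<and> e \<noteq> e' \<and> e \<inter> e' \<noteq> {}}"
  | (2) "p \<in> {{Inr (v, i, a), Inr (v, j, b)} | v i j a b. v \<in> HV \<and> 1 \<le> i \<and> i \<le> f v \<and>
          1 \<le> j \<and> j \<le> f v \<and> i \<noteq> j}"
  | (3) "p \<in> {{Inl e, Inr (v, i, a)} | e v i a. e \<in> HE \<and> v \<in> e \<and> v \<in> HV \<and> 1 \<le> i \<and> i \<le> f v}"
    unfolding glg_edges_def Un_iff by argo
  then show ?thesis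
  proof cases
    case 1
    then obtain e e' where "p = {Inl e, Inl e'}" "e \<in> HE" "e' \<in> HE" "e \<noteq> e'" "e \<inter> e' \<noteq> {}"
      unfolding mem_Collect_eq by (elim exE conjE) simp
    then show ?thesis using Inl_Inl by blast
  next
    case 2
    then obtain v i j a b where "p = {Inr (v, i, a), Inr (v, j, b)}" "v \<in> HV" "1 \<le> i" "i \<le> f v"
        "1 \<le> j" "j \<le> f v" "i \<noteq> j"
      unfolding mem_Collect_eq by (elim exE conjE) simp
    then show ?thesis using Inr_Inr by simp
  next
    case 3
    then obtain e v i a where "p = {Inl e, Inr (v, i, a)}" "e \<in> HE" "v \<in> e" "v \<in> HV" "1 \<le> i" "i \<le> f v"
      unfolding mem_Collect_eq by (elim exE conjE) simp
    then show ?thesis using Inl_Inr by simp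
  qed
qed

lemma star_mem_glg_cliques:
  "v \<in> HV \<Longrightarrow> f v = 0 \<Longrightarrow> 2 \<le> card {e\<in>HE. v \<in> e} \<Longrightarrow> star HE v \<in> glg_cliques HV HE f"
  unfolding glg_cliques_def by blast

lemma side_mem_glg_cliques:
  "v \<in> HV \<Longrightarrow> f v \<noteq> 0 \<Longrightarrow> star HE v \<union> side f v a \<in> glg_cliques HV HE f"
  unfolding glg_cliques_def vertex_cliques_def by (cases a) auto

lemma cross_mem_glg_cliques:
  assumes "v \<in> HV" "2 \<le> f v" "j \<in> {1..f v}"
  shows "cross f v j \<in> glg_cliques HV HE f"
proof -
  have "cross f v j \<in> vertex_cliques HE f v" using assms(2,3) unfolding vertex_cliques_def by auto
  then show ?thesis using assms(1) unfolding glg_cliques_def by blast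
qed

lemma cocktail_party_edge_covered:
  assumes v: "v \<in> HV" and ij: "i \<in> {1..f v}" "j \<in> {1..f v}" "i \<noteq> j"
  shows "{Inr (v, i, a), Inr (v, j, b)} \<in> cover_edges (glg_cliques HV HE f)"
proof (cases "a = b")
  case True
  then have "Inr (v, i, a) \<in> star HE v \<union> side f v a" "Inr (v, j, b) \<in> star HE v \<union> side f v a"
    using ij unfolding side_def by auto
  moreover have "f v \<noteq> 0" using ij by auto
  ultimately show ?thesis using v ij(3) by (auto intro!: cover_edgesI side_mem_glg_cliques)
next
  case False
  have "2 \<le> f v" using ij by auto
  obtain j' where j': "j' \<in> {1..f v}" "Inr (v, i, a) \<in> cross f v j'" "Inr (v, j, b) \<in> cross f v j'"
  proof (cases a)
    case True
    then show ?thesis using that[of j] ij False unfolding cross_def by auto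
  next
    case False
    then show ?thesis using that[of i] ij \<open>a \<noteq> b\<close> unfolding cross_def by auto
  qed
  show ?thesis
    by (rule cover_edgesI[OF _ cross_mem_glg_cliques]) (use v ij \<open>2 \<le> f v\<close> j' in auto)
qed

lemma glg_edges_subset_cover_edges:
  assumes "simple_graph HV HE"
  shows "glg_edges HV HE f \<subseteq> cover_edges (glg_cliques HV HE f)"
proof
  have fin: "finite HE" and sub: "\<And>e. e \<in> HE \<Longrightarrow> e \<subseteq> HV"
    using assms unfolding simple_graph_def
    by (auto intro: finite_subset[of HE "Pow HV"])
  fix p assume "p \<in> glg_edges HV HE f"
  then show "p \<in> cover_edges (glg_cliques HV HE f)"
  proof (cases rule: glg_edgeE)
    case (Inl_Inl e e' v)
    then have v: "v \<in> HV" "Inl e \<in> star HE v" "Inl e' \<in> star HE v" using sub unfolding star_def by auto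
    show ?thesis
    proof (cases "f v = 0")
      case True
      have "{e, e'} \<subseteq> {e\<in>HE. v \<in> e}" using Inl_Inl by blast
      then have "2 \<le> card {e\<in>HE. v \<in> e}"
        using card_mono[of "{e\<in>HE. v \<in> e}" "{e, e'}"] fin Inl_Inl(4) by simp
      then show ?thesis using Inl_Inl(1,4) v True by (auto intro!: cover_edgesI star_mem_glg_cliques)
    next
      case False
      then show ?thesis using Inl_Inl(1,4) v by (auto intro!: cover_edgesI side_mem_glg_cliques)
    qed
  next
    case (Inr_Inr v i j a b)
    then show ?thesis by (simp add: cocktail_party_edge_covered)
  next
    case (Inl_Inr e v i a)
    then have "Inl e \<in> star HE v \<union> side f v a" "Inr (v, i, a) \<in> star HE v \<union> side f v a" "f v \<noteq> 0"
      unfolding star_def side_def by auto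
    then show ?thesis using Inl_Inr by (auto intro!: cover_edgesI side_mem_glg_cliques)
  qed
qed

lemma star_side_memE:
  assumes "x \<in> star HE v \<union> side f v a"
  obtains (Inl) e where "x = Inl e" "e \<in> HE" "v \<in> e"
    | (Inr) i where "x = Inr (v, i, a)" "i \<in> {1..f v}"
  using assms unfolding star_def side_def by blast

lemma star_side_edge:
  assumes "v \<in> HV" "u \<in> star HE v \<union> side f v a" "w \<in> star HE v \<union> side f v a" "u \<noteq> w"
  shows "{u, w} \<in> glg_edges HV HE f"
  using assms(2)
proof (cases rule: star_side_memE)
  case (Inl e)
  from assms(3) show ?thesis
  proof (cases rule: star_side_memE)
    case (Inl e')
    then show ?thesis using \<open>u = Inl e\<close> \<open>e \<in> HE\<close> \<open>v \<in> e\<close> assms(4) by (auto intro: glg_edge_Inl_Inl)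
  next
    case (Inr i)
    then show ?thesis using \<open>u = Inl e\<close> \<open>e \<in> HE\<close> \<open>v \<in> e\<close> assms(1) by (simp add: glg_edge_Inl_Inr)
  qed
next
  case (Inr i)
  from assms(3) show ?thesis
  proof (cases rule: star_side_memE)
    case (Inl e)
    then show ?thesis using \<open>u = Inr (v, i, a)\<close> \<open>i \<in> {1..f v}\<close> assms(1)
      by (simp add: glg_edge_Inl_Inr insert_commute)
  next
    case (Inr i')
    then show ?thesis using \<open>u = Inr (v, i, a)\<close> \<open>i \<in> {1..f v}\<close> assms(1,4) by (auto intro: glg_edge_Inr_Inr)
  qed
qed

lemma cross_edge:
  assumes "v \<in> HV" "j \<in> {1..f v}" "u \<in> cross f v j" "w \<in> cross f v j" "u \<noteq> w"
  shows "{u, w} \<in> glg_edges HV HE f"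
proof -
  have "\<exists>i a. x = Inr (v, i, a) \<and> i \<in> {1..f v} \<and> (a \<longleftrightarrow> i \<noteq> j)" if "x \<in> cross f v j" for x
    using that assms(2) unfolding cross_def by auto
  then obtain i i' a a' where "u = Inr (v, i, a)" "w = Inr (v, i', a')" "i \<in> {1..f v}" "i' \<in> {1..f v}" "i \<noteq> i'"
    using assms(3-5) by metis
  then show ?thesis using assms(1) glg_edge_Inr_Inr by simp
qed

lemma glg_clique_edge:
  assumes "K \<in> glg_cliques HV HE f" "u \<in> K" "w \<in> K" "u \<noteq> w"
  shows "{u, w} \<in> glg_edges HV HE f"
proof -
  from assms(1) consider (star) v where "v \<in> HV" "K = star HE v"
    | (side) v a where "v \<in> HV" "K = star HE v \<union> side f v a"
    | (cross) v j where "v \<in> HV" "j \<in> {1..f v}" "K = cross f v j"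
    unfolding glg_cliques_def vertex_cliques_def by (auto split: if_splits)
  then show ?thesis
  proof cases
    case star
    then show ?thesis using assms(2-4) star_side_edge[of v HV u HE f True w] by simp
  next
    case side
    then show ?thesis using assms(2-4) star_side_edge by simp
  next
    case cross
    then show ?thesis using assms(2-4) cross_edge by simp
  qed
qed

lemma glg_edges_eq_cover_edges:
  assumes "simple_graph HV HE"
  shows "glg_edges HV HE f = cover_edges (glg_cliques HV HE f)"
proof
  show "cover_edges (glg_cliques HV HE f) \<subseteq> glg_edges HV HE f"
  proof
    fix p assume "p \<in> cover_edges (glg_cliques HV HE f)"
    then obtain u w K where "p = {u, w}" "u \<noteq> w" "K \<in> glg_cliques HV HE f" "u \<in> K" "w \<in> K"
      unfolding cover_edges_iff by blast
    then show "p \<in> glg_edges HV HE f" using glg_clique_edge by simp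
  qed
qed (rule glg_edges_subset_cover_edges[OF assms])

section \<open>A vertex order for a generalized line graph\<close>

definition vertex_block :: "('b \<Rightarrow> nat) \<Rightarrow> 'b \<Rightarrow> 'b glg_vertex list" where
  "vertex_block f v = map (\<lambda>i. Inr (v, i, True)) [1..<f v + 1] @ map (\<lambda>i. Inr (v, i, False)) [1..<f v + 1]"

lemma set_vertex_block: "set (vertex_block f v) = side f v True \<union> side f v False"
  unfolding vertex_block_def side_def set_append set_map set_upt
  by (simp add: atLeastLessThanSuc_atLeastAtMost)

lemma distinct_vertex_block: "distinct (vertex_block f v)"
  unfolding vertex_block_def by (auto simp: distinct_map inj_on_def)

lemma cross_subset_sides: "j \<in> {1..f v} \<Longrightarrow> cross f v j \<subseteq> side f v True \<union> side f v False"
  unfolding cross_def side_def by auto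

lemma vertex_cliquesE:
  assumes "K \<in> vertex_cliques HE f v"
  obtains (side) a where "K = star HE v \<union> side f v a" | (cross) j where "j \<in> {1..f v}" "K = cross f v j"
  using assms unfolding vertex_cliques_def by (auto split: if_splits)

lemma vertex_cliques_subset:
  assumes "K \<in> vertex_cliques HE f v"
  shows "K \<subseteq> star HE v \<union> set (vertex_block f v)"
  using assms
proof (cases rule: vertex_cliquesE)
  case (side a)
  have "side f v a \<subseteq> side f v True \<union> side f v False" by (cases a) simp_all
  then show ?thesis using side unfolding set_vertex_block by blast
next
  case (cross j)
  then show ?thesis using cross_subset_sides[of j f v] unfolding set_vertex_block by blast
qed

lemma card_vertex_cliques: "card (vertex_cliques HE f v) \<le> min (f v + 2) (2 * f v)"
proof -
  let ?sides = "{star HE v \<union> side f v True, star HE v \<union> side f v False}"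
  have sides: "card ?sides \<le> 2" by (rule card_insert_le_m1) auto
  consider "f v = 0" | "f v = 1" | "2 \<le> f v" by linarith
  then show ?thesis
  proof cases
    case 1
    then show ?thesis unfolding vertex_cliques_def by simp
  next
    case 2
    then show ?thesis using sides unfolding vertex_cliques_def by simp
  next
    case 3
    then have "vertex_cliques HE f v = ?sides \<union> cross f v ` {1..f v}"
      unfolding vertex_cliques_def by simp
    then have "card (vertex_cliques HE f v) \<le> card ?sides + card (cross f v ` {1..f v})"
      by (metis card_Un_le)
    also have "\<dots> \<le> 2 + f v" using sides card_image_le[of "{1..f v}" "cross f v"] by simp
    finally show ?thesis using 3 by simp
  qed
qed

lemma finite_vertex_cliques: "finite (vertex_cliques HE f v)"
  unfolding vertex_cliques_def by simp

lemma set_drop_vertex_block: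
  assumes "f v \<le> n"
  shows "set (drop n (vertex_block f v)) = (\<lambda>i. Inr (v, i, False)) ` {n - f v + 1..f v}"
proof -
  have "drop n (vertex_block f v) = map (\<lambda>i. Inr (v, i, False)) [n - f v + 1..<f v + 1]"
    using assms unfolding vertex_block_def by (simp add: drop_map drop_upt del: upt_Suc)
  then show ?thesis by (simp add: atLeastLessThanSuc_atLeastAtMost del: upt_Suc)
qed

lemma suffix_bound_vertex_block: "suffix_bound (vertex_block f v) (vertex_cliques HE f v) 2"
  unfolding suffix_bound_def
proof
  fix n
  let ?m = "f v"
  let ?meet = "{K\<in>vertex_cliques HE f v. K \<inter> set (drop n (vertex_block f v)) \<noteq> {}}"
  have len: "length (vertex_block f v) = 2 * ?m" unfolding vertex_block_def by simp
  show "card ?meet < length (vertex_block f v) - n + 2"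
  proof (cases "n < ?m")
    case True
    have "card ?meet \<le> card (vertex_cliques HE f v)" by (rule card_mono) (simp_all add: finite_vertex_cliques)
    also have "\<dots> \<le> ?m + 2" using card_vertex_cliques[of HE f v] by simp
    finally show ?thesis using True len by simp
  next
    case False
    txt \<open>Past the \<open>x\<close>-vertices, a clique meets the suffix only through some \<open>y\<^sub>i\<close>, and
      \<open>y\<^sub>i\<close> lies in just two cliques: the \<open>y\<close>-side clique and \<open>cross f v i\<close>.\<close>
    have "?meet \<subseteq> insert (star HE v \<union> side f v False) (cross f v ` {n - ?m + 1..?m})"
    proof
      fix K assume K: "K \<in> ?meet"
      then obtain x where "x \<in> K" "x \<in> set (drop n (vertex_block f v))" by blast
      then obtain i where i: "i \<in> {n - ?m + 1..?m}" "Inr (v, i, False) \<in> K"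
        unfolding set_drop_vertex_block[of f v n, OF leI[OF False]] by blast
      from K have "K \<in> vertex_cliques HE f v" by blast
      then show "K \<in> insert (star HE v \<union> side f v False) (cross f v ` {n - ?m + 1..?m})"
      proof (cases rule: vertex_cliquesE)
        case (side a)
        then show ?thesis using i(2) unfolding star_def side_def by (cases a) auto
      next
        case (cross j)
        then have "i = j" using i(2) unfolding cross_def by auto
        then show ?thesis using cross i(1) by blast
      qed
    qed
    then have "card ?meet \<le> card (insert (star HE v \<union> side f v False) (cross f v ` {n - ?m + 1..?m}))"
      by (rule card_mono[rotated]) simp
    also have "\<dots> \<le> card (cross f v ` {n - ?m + 1..?m}) + 1" by (simp add: card_insert_if)
    also have "\<dots> \<le> card {n - ?m + 1..?m} + 1" using card_image_le[of "{n - ?m + 1..?m}" "cross f v"] by simp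
    finally show ?thesis using len by simp
  qed
qed

lemma set_vertex_blocks:
  "set (concat (map (vertex_block f) vs)) = (\<Union>v\<in>set vs. side f v True \<union> side f v False)"
  by (simp add: set_vertex_block)

lemma distinct_vertex_blocks: "distinct vs \<Longrightarrow> distinct (concat (map (vertex_block f) vs))"
proof (induction vs)
  case (Cons v vs)
  have "set (vertex_block f v) \<inter> set (concat (map (vertex_block f) vs)) = {}"
    using Cons.prems unfolding set_vertex_block set_vertex_blocks side_def by auto
  then show ?case using Cons distinct_vertex_block[of f v] by simp
qed simp

lemma card_vertex_cliques_le_length:
  "card (\<Union>v\<in>set vs. vertex_cliques HE f v) \<le> length (concat (map (vertex_block f) vs))"
proof (induction vs)
  case (Cons v vs)
  have "card (vertex_cliques HE f v) \<le> length (vertex_block f v)"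
    using card_vertex_cliques[of HE f v] unfolding vertex_block_def by simp
  then show ?case
    using Cons card_Un_le[of "vertex_cliques HE f v" "\<Union>v\<in>set vs. vertex_cliques HE f v"] by simp
qed simp

lemma suffix_bound_vertex_blocks:
  "distinct vs \<Longrightarrow> suffix_bound (concat (map (vertex_block f) vs)) (\<Union>v\<in>set vs. vertex_cliques HE f v) 2"
proof (induction vs)
  case Nil
  show ?case unfolding suffix_bound_def by simp
next
  case (Cons v vs)
  have disjoint: "\<forall>K\<in>vertex_cliques HE f v. K \<inter> set (concat (map (vertex_block f) vs)) = {}"
  proof
    fix K assume "K \<in> vertex_cliques HE f v"
    then have "K \<subseteq> star HE v \<union> (side f v True \<union> side f v False)"
      by (subst set_vertex_block[symmetric]) (rule vertex_cliques_subset)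
    then show "K \<inter> set (concat (map (vertex_block f) vs)) = {}"
      using Cons.prems unfolding set_vertex_blocks star_def side_def by auto
  qed
  have IH: "suffix_bound (concat (map (vertex_block f) vs)) (\<Union>v\<in>set vs. vertex_cliques HE f v) 2"
    using Cons by simp
  have fin: "finite (\<Union>v\<in>set vs. vertex_cliques HE f v)" by (simp add: finite_vertex_cliques)
  from suffix_bound_append[OF suffix_bound_vertex_block IH card_vertex_cliques_le_length disjoint
      finite_vertex_cliques fin]
  show ?case by (simp only: list.map concat.simps list.set UN_insert)
qed

lemma suffix_bound_stars:
  assumes bound: "\<forall>n. card (C \<inter> \<Union>(set (drop n es))) \<le> length es - n + 1" and fin: "finite C"
  shows "suffix_bound (map Inl es) (star HE ` C) 2"
  unfolding suffix_bound_def
proof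
  fix n
  have "{K\<in>star HE ` C. K \<inter> set (drop n (map Inl es)) \<noteq> {}} \<subseteq> star HE ` (C \<inter> \<Union>(set (drop n es)))"
    unfolding star_def by (auto simp: drop_map)
  then have "card {K\<in>star HE ` C. K \<inter> set (drop n (map Inl es)) \<noteq> {}} \<le> card (star HE ` (C \<inter> \<Union>(set (drop n es))))"
    by (rule card_mono[rotated]) (use fin in simp)
  also have "\<dots> \<le> card (C \<inter> \<Union>(set (drop n es)))" by (rule card_image_le) (use fin in simp)
  also have "\<dots> \<le> length es - n + 1" using bound by blast
  finally show "card {K\<in>star HE ` C. K \<inter> set (drop n (map Inl es)) \<noteq> {}} < length (map Inl es) - n + 2"
    by simp
qed

lemma glg_verts_eq:
  fixes HV :: "'b set" and HE :: "'b set set" and f :: "'b \<Rightarrow> nat"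
  shows "glg_verts HV HE f = Inl ` HE \<union> (\<Union>v\<in>HV. side f v True \<union> side f v False)"
proof -
  have "({Inr (v, l, b) | v l b. v \<in> HV \<and> 1 \<le> l \<and> l \<le> f v} :: 'b glg_vertex set) =
      (\<Union>v\<in>HV. side f v True \<union> side f v False)"
  proof (intro equalityI subsetI)
    fix x :: "'b glg_vertex" assume "x \<in> {Inr (v, l, b) | v l b. v \<in> HV \<and> 1 \<le> l \<and> l \<le> f v}"
    then obtain v l b where "x = Inr (v, l, b)" "v \<in> HV" "l \<in> {1..f v}" by auto
    moreover have "side f v b \<subseteq> side f v True \<union> side f v False" by (cases b) simp_all
    ultimately show "x \<in> (\<Union>v\<in>HV. side f v True \<union> side f v False)" unfolding side_def by blast
  qed (auto simp: side_def)
  then show ?thesis unfolding glg_verts_def by simp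
qed

lemma glg_cliques_subset:
  assumes "K \<in> glg_cliques HV HE f"
  shows "K \<noteq> {} \<and> K \<subseteq> glg_verts HV HE f"
proof -
  from assms consider (star) v where "2 \<le> card {e\<in>HE. v \<in> e}" "K = star HE v"
    | (vertex) v where "v \<in> HV" "K \<in> vertex_cliques HE f v"
    unfolding glg_cliques_def by blast
  then show ?thesis
  proof cases
    case star
    then have "{e\<in>HE. v \<in> e} \<noteq> {}" by (metis card.empty not_numeral_le_zero)
    then show ?thesis using star unfolding star_def glg_verts_eq by blast
  next
    case vertex
    then have "f v \<noteq> 0" unfolding vertex_cliques_def by (auto split: if_splits)
    have "K \<noteq> {}"
      using vertex(2)
    proof (cases rule: vertex_cliquesE)
      case (side a)
      then show ?thesis using \<open>f v \<noteq> 0\<close> unfolding side_def by auto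
    next
      case (cross j)
      then show ?thesis unfolding cross_def by blast
    qed
    moreover have "star HE v \<union> set (vertex_block f v) \<subseteq> glg_verts HV HE f"
      using vertex(1) unfolding star_def set_vertex_block glg_verts_eq by blast
    ultimately show ?thesis using vertex_cliques_subset[OF vertex(2)] by blast
  qed
qed

lemma glg_vertex_order:
  assumes "simple_graph HV HE"
  obtains ws where "distinct ws" "set ws = glg_verts HV HE f" "suffix_bound ws (glg_cliques HV HE f) 2"
proof -
  let ?C = "{v\<in>HV. f v = 0 \<and> 2 \<le> card {e\<in>HE. v \<in> e}}"
  have fin_HV: "finite HV" using assms unfolding simple_graph_def by blast
  have HE: "\<forall>e\<in>HE. card e = 2 \<and> e \<subseteq> HV" using assms unfolding simple_graph_def by fastforce
  then have fin_HE: "finite HE" using fin_HV by (meson PowI finite_Pow_iff finite_subset subsetI)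
  obtain es where es: "distinct es" "set es = HE" "\<forall>n. card (?C \<inter> \<Union>(set (drop n es))) \<le> length es - n + 1"
    using edge_order_extending_suffix[OF fin_HE _ _ empty_subsetI, of ?C] HE by auto
  obtain vs where vs: "distinct vs" "set vs = HV" using finite_distinct_list[OF fin_HV] by blast
  let ?blocks = "concat (map (vertex_block f) vs)"
  have disjoint: "set (map Inl es) \<inter> set ?blocks = {}" "\<forall>K\<in>star HE ` ?C. K \<inter> set ?blocks = {}"
    unfolding set_vertex_blocks side_def star_def by auto
  show thesis
  proof (rule that[of "map Inl es @ ?blocks"])
    show "distinct (map Inl es @ ?blocks)"
      using es(1) distinct_vertex_blocks[OF vs(1)] disjoint(1) by (simp add: distinct_map)
    show "set (map Inl es @ ?blocks) = glg_verts HV HE f"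
      unfolding glg_verts_eq set_vertex_blocks using es(2) vs(2) by (simp add: set_vertex_block)
    have "glg_cliques HV HE f = star HE ` ?C \<union> (\<Union>v\<in>set vs. vertex_cliques HE f v)"
      unfolding glg_cliques_def vs(2) ..
    then show "suffix_bound (map Inl es @ ?blocks) (glg_cliques HV HE f) 2"
      using suffix_bound_append[OF suffix_bound_stars[OF es(3)] suffix_bound_vertex_blocks[OF vs(1)]
          card_vertex_cliques_le_length disjoint(2)] fin_HV
      by (simp add: finite_vertex_cliques)
  qed
qed

theorem theorem1p2:
  fixes HV :: "'b set" and HE :: "'b set set" and f :: "'b \<Rightarrow> nat"
    and V :: "'a set" and E :: "'a set set"
  assumes "simple_graph HV HE"
    and "simple_graph V E"
    and "graph_iso V E (glg_verts HV HE f) (glg_edges HV HE f)"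
  shows "competition_number V E \<le> 2"
proof -
  obtain ws where ws: "distinct ws" "set ws = glg_verts HV HE f" "suffix_bound ws (glg_cliques HV HE f) 2"
    using glg_vertex_order[OF assms(1)] .
  have "comp_with_isolated V E 2"
    using comp_with_isolated_via_iso[OF assms(3,2) ws(1,2) _ glg_edges_eq_cover_edges[OF assms(1)] ws(3)]
      glg_cliques_subset by blast
  then show ?thesis unfolding competition_number_def by (rule Least_le)
qed

end
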